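(* Let $T$ be a complete dependent (NIP) first-order theory with monster model $\mathfrak{C}$. For $\ell<2$ let $\mathcal{D}_\ell$ be a proper filter on a set $I_\ell$, $m(\ell)<\omega$, and $\bar a_{\ell,t}\in {}^{m(\ell)}\mathfrak{C}$ for $t \in I_\ell$. Let $C\subseteq\mathfrak{C}$ and $\Delta$ be a set of formulas, both finite. Then there are $\mathcal{S}_0 \in \mathcal{D}_0^+$, $\mathcal{S}_1\in\mathcal{D}^+_1$ and a type $q$ such that $(\forall^{\mathcal{D}_0} s_0\in\mathcal{S}_0)(\forall^{\mathcal{D}_1} s_1\in \mathcal{S}_1)\,[q = \mathrm{tp}_\Delta(\bar a_{0,s_0}{}^\frown\bar a_{1,s_1}, C)]$.
   Context: For a filter $\mathcal{D}$ on $I$, $\mathcal{D}^+$ is the set of subsets of $I$ meeting every member of $\mathcal{D}$; for $\mathcal{S}\in\mathcal{D}^+$, "$(\forall^{\mathcal{D}} s\in\mathcal{S})\,\phi(s)$" means $\{s\in\mathcal{S}:\phi(s)\}$ belongs to the filter generated by $\mathcal{D}\cup\{\mathcal{S}\}$. $\mathrm{tp}_\Delta(\bar a, C)$ is the set of formulas $\varphi(\bar x,\bar c)^{\mathbf t}$ with $\varphi\in\Delta$, $\bar c$ from $C$, $\mathbf t$ a truth value, satisfied by $\bar a$. *)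

theory Defs
  imports Main
begin

datatype 'f trm = Var nat | Fn 'f "'f trm list"

datatype ('f, 'r) fm =
    FF
  | Eq "'f trm" "'f trm"
  | Rel 'r "'f trm list"
  | Neg "('f, 'r) fm"
  | Conj "('f, 'r) fm" "('f, 'r) fm"
  | Ex nat "('f, 'r) fm"

fun evalt :: "('f \<Rightarrow> 'a list \<Rightarrow> 'a) \<Rightarrow> (nat \<Rightarrow> 'a) \<Rightarrow> 'f trm \<Rightarrow> 'a" where
  "evalt F e (Var i) = e i"
| "evalt F e (Fn f ts) = F f (map (evalt F e) ts)"

fun fvt :: "'f trm \<Rightarrow> nat set" where
  "fvt (Var i) = {i}"
| "fvt (Fn f ts) = (\<Union>t\<in>set ts. fvt t)"

fun sat :: "('f \<Rightarrow> 'a list \<Rightarrow> 'a) \<Rightarrow> ('r \<Rightarrow> 'a list \<Rightarrow> bool) \<Rightarrow> ('f, 'r) fm \<Rightarrow> (nat \<Rightarrow> 'a) \<Rightarrow> bool" where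
  "sat F R FF e = False"
| "sat F R (Eq s t) e = (evalt F e s = evalt F e t)"
| "sat F R (Rel r ts) e = R r (map (evalt F e) ts)"
| "sat F R (Neg \<phi>) e = (\<not> sat F R \<phi> e)"
| "sat F R (Conj \<phi> \<psi>) e = (sat F R \<phi> e \<and> sat F R \<psi> e)"
| "sat F R (Ex x \<phi>) e = (\<exists>v. sat F R \<phi> (e(x := v)))"

fun fv :: "('f, 'r) fm \<Rightarrow> nat set" where
  "fv FF = {}"
| "fv (Eq s t) = fvt s \<union> fvt t"
| "fv (Rel r ts) = (\<Union>t\<in>set ts. fvt t)"
| "fv (Neg \<phi>) = fv \<phi>"
| "fv (Conj \<phi> \<psi>) = fv \<phi> \<union> fv \<psi>"
| "fv (Ex x \<phi>) = fv \<phi> - {x}"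

definition env :: "'a list \<Rightarrow> (nat \<Rightarrow> 'a) \<Rightarrow> nat \<Rightarrow> 'a" where
  "env xs b = (\<lambda>j. if j < length xs then xs ! j else b j)"

text \<open>The formula phi(x;y), with x the variables 0..k-1 and y the remaining ones,
  has the independence property in the structure (equivalently in its complete theory).\<close>
definition has_IP :: "('f \<Rightarrow> 'a list \<Rightarrow> 'a) \<Rightarrow> ('r \<Rightarrow> 'a list \<Rightarrow> bool) \<Rightarrow> ('f, 'r) fm \<Rightarrow> nat \<Rightarrow> bool" where
  "has_IP F R \<phi> k \<longleftrightarrow>
     (\<forall>n. \<exists>a :: nat \<Rightarrow> 'a list. (\<forall>i<n. length (a i) = k) \<and>
        (\<forall>S \<subseteq> {..<n}. \<exists>b :: nat \<Rightarrow> 'a. \<forall>i<n. (sat F R \<phi> (env (a i) b) \<longleftrightarrow> i \<in> S)))"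

definition NIP :: "('f \<Rightarrow> 'a list \<Rightarrow> 'a) \<Rightarrow> ('r \<Rightarrow> 'a list \<Rightarrow> bool) \<Rightarrow> bool" where
  "NIP F R \<longleftrightarrow> (\<forall>(\<phi> :: ('f, 'r) fm) k. \<not> has_IP F R \<phi> k)"

text \<open>tp_Delta(xs, C): the set of phi(x, c)^t with phi in Delta, c a tuple from C
  (x = variables 0..length xs - 1, the parameter variables following), t a truth value,
  satisfied by xs.\<close>
definition tp_Delta :: "('f \<Rightarrow> 'a list \<Rightarrow> 'a) \<Rightarrow> ('r \<Rightarrow> 'a list \<Rightarrow> bool) \<Rightarrow> ('f, 'r) fm set
    \<Rightarrow> 'a list \<Rightarrow> 'a set \<Rightarrow> (('f, 'r) fm \<times> 'a list \<times> bool) set" where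
  "tp_Delta F R \<Delta> xs C =
     {(\<phi>, cs, t). \<phi> \<in> \<Delta> \<and> set cs \<subseteq> C \<and> fv \<phi> \<subseteq> {..<length xs + length cs}
        \<and> sat F R \<phi> (\<lambda>j. (xs @ cs) ! j) = t}"

definition dplus :: "'i filter \<Rightarrow> 'i set set" where
  "dplus D = {S. \<forall>X. eventually (\<lambda>x. x \<in> X) D \<longrightarrow> S \<inter> X \<noteq> {}}"

definition forall_D :: "'i filter \<Rightarrow> 'i set \<Rightarrow> ('i \<Rightarrow> bool) \<Rightarrow> bool" where
  "forall_D D S P \<longleftrightarrow> eventually (\<lambda>s. s \<in> {s\<in>S. P s}) (inf D (principal S))"

end

theory Submission
  imports Defs
begin

(* Call a two-variable map f "homogeneous" for the filters D0, D1 if there are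
   positive sets S0, S1 on which f is (D0, D1)-almost-everywhere equal to a single value v.
   The heart of the argument concerns one relation P s0 s1: if P were not homogeneous, every
   s0 in a D0-large set splits every D1-positive set into two D1-positive halves; iterating
   this splitting along a binary tree of depth n produces n points s0(0..n-1) whose P-traces
   realise all subsets of {0..n-1}, i.e. P has the independence property.  So a relation without IP
   is homogeneous for all proper filters, and this "hereditary" homogeneity is preserved under
   pairing and under functions that are determined by homogeneous data.  Finally the
   Delta-type of a0 s0 @ a1 s1 over C is determined by the truth values of the finitely many
   relations phi(a0 s0, a1 s1, cs) with phi in Delta and cs a short tuple from C, each of
   which lacks IP by NIP. *)

section \<open>Positive sets and relative quantifiers\<close>

lemma dplus_iff_frequently: "S \<in> dplus D \<longleftrightarrow> (\<exists>\<^sub>F x in D. x \<in> S)"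
proof
  assume S: "S \<in> dplus D"
  show "\<exists>\<^sub>F x in D. x \<in> S"
    unfolding frequently_def
  proof
    assume "\<forall>\<^sub>F x in D. x \<notin> S"
    then have "\<forall>\<^sub>F x in D. x \<in> - S" by simp
    with S have "S \<inter> - S \<noteq> {}" unfolding dplus_def by blast
    then show False by simp
  qed
next
  assume S: "\<exists>\<^sub>F x in D. x \<in> S"
  have "S \<inter> X \<noteq> {}" if "\<forall>\<^sub>F x in D. x \<in> X" for X
    using frequently_ex[OF frequently_eventually_conj[OF S that]] by blast
  then show "S \<in> dplus D" unfolding dplus_def by blast
qed

lemma dplus_nonempty: "S \<in> dplus D \<Longrightarrow> \<exists>x. x \<in> S"
  unfolding dplus_iff_frequently by (rule frequently_ex)

lemma UNIV_in_dplus: "D \<noteq> bot \<Longrightarrow> UNIV \<in> dplus D"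
  by (simp add: dplus_iff_frequently)

lemma dplus_inf_principal: "S' \<in> dplus (inf D (principal S)) \<longleftrightarrow> S \<inter> S' \<in> dplus D"
  by (simp add: dplus_iff_frequently frequently_def eventually_inf_principal)

lemma inf_principal_nonbot: "S \<in> dplus D \<Longrightarrow> inf D (principal S) \<noteq> bot"
  unfolding dplus_iff_frequently frequently_def
  by (simp add: eventually_False[symmetric] eventually_inf_principal)

lemma forall_D_iff: "forall_D D S P \<longleftrightarrow> (\<forall>\<^sub>F x in D. x \<in> S \<longrightarrow> P x)"
  unfolding forall_D_def eventually_inf_principal by simp

lemma forall_D_inf_principal: "forall_D (inf D (principal S)) S' P \<longleftrightarrow> forall_D D (S \<inter> S') P"
  by (simp add: forall_D_iff eventually_inf_principal imp_conjL)

lemma forall_D_mono: "forall_D D S P \<Longrightarrow> S' \<subseteq> S \<Longrightarrow> (\<And>x. P x \<Longrightarrow> Q x) \<Longrightarrow> forall_D D S' Q"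
  unfolding forall_D_iff by (auto elim: eventually_mono)

lemma forall_D_conj: "forall_D D S P \<Longrightarrow> forall_D D S Q \<Longrightarrow> forall_D D S (\<lambda>x. P x \<and> Q x)"
  unfolding forall_D_iff by (auto elim: eventually_elim2)

section \<open>Homogeneity of two-variable maps\<close>

definition homogeneous :: "'i filter \<Rightarrow> 'j filter \<Rightarrow> ('i \<Rightarrow> 'j \<Rightarrow> 'v) \<Rightarrow> bool" where
  "homogeneous D0 D1 f \<longleftrightarrow> (\<exists>S0 S1 v. S0 \<in> dplus D0 \<and> S1 \<in> dplus D1 \<and>
      forall_D D0 S0 (\<lambda>s0. forall_D D1 S1 (\<lambda>s1. v = f s0 s1)))"

definition hereditarily_homogeneous :: "('i \<Rightarrow> 'j \<Rightarrow> 'v) \<Rightarrow> bool" where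
  "hereditarily_homogeneous f \<longleftrightarrow>
     (\<forall>(D0 :: 'i filter) (D1 :: 'j filter). D0 \<noteq> bot \<longrightarrow> D1 \<noteq> bot \<longrightarrow> homogeneous D0 D1 f)"

definition rel_has_IP :: "('i \<Rightarrow> 'j \<Rightarrow> bool) \<Rightarrow> bool" where
  "rel_has_IP P \<longleftrightarrow> (\<forall>n. \<exists>s0 :: nat \<Rightarrow> 'i. \<forall>S \<subseteq> {..<n}. \<exists>s1. \<forall>i<n. P (s0 i) s1 \<longleftrightarrow> i \<in> S)"

text \<open>If P is not homogeneous, then D0-almost every s0 splits a given D1-positive set T into two
  positive halves; for finitely many T one s0 splits them all simultaneously.\<close>
lemma splitting_point:
  fixes P :: "'i \<Rightarrow> 'j \<Rightarrow> bool"
  assumes D0: "D0 \<noteq> bot" and inhom: "\<not> homogeneous D0 D1 P"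
    and fin: "finite \<T>" and pos: "\<T> \<subseteq> dplus D1"
  shows "\<exists>s0. \<forall>T\<in>\<T>. {s1\<in>T. P s0 s1} \<in> dplus D1 \<and> {s1\<in>T. \<not> P s0 s1} \<in> dplus D1"
proof -
  have splits: "\<forall>\<^sub>F s0 in D0. {s1\<in>T. v \<noteq> P s0 s1} \<in> dplus D1"
    if "T \<in> dplus D1" for T v
  proof -
    let ?E = "{s0. \<forall>\<^sub>F s1 in D1. s1 \<in> T \<longrightarrow> v = P s0 s1}"
    have "forall_D D0 ?E (\<lambda>s0. forall_D D1 T (\<lambda>s1. v = P s0 s1))"
      by (simp add: forall_D_iff)
    then have "?E \<notin> dplus D0"
      using inhom \<open>T \<in> dplus D1\<close> unfolding homogeneous_def by blast
    then show ?thesis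
      by (simp add: dplus_iff_frequently not_frequently frequently_def)
  qed
  have "\<forall>\<^sub>F s0 in D0. {s1\<in>T. P s0 s1} \<in> dplus D1 \<and> {s1\<in>T. \<not> P s0 s1} \<in> dplus D1"
    if "T \<in> \<T>" for T
  proof -
    have "T \<in> dplus D1" using that pos by blast
    then show ?thesis using splits[of T False] splits[of T True] by (simp add: eventually_conj_iff)
  qed
  then have "\<forall>\<^sub>F s0 in D0. \<forall>T\<in>\<T>. {s1\<in>T. P s0 s1} \<in> dplus D1 \<and> {s1\<in>T. \<not> P s0 s1} \<in> dplus D1"
    by (intro eventually_ball_finite fin) auto
  from eventually_happens'[OF D0 this] show ?thesis by auto
qed

lemma shattering_tree:
  fixes P :: "'i \<Rightarrow> 'j \<Rightarrow> bool"
  assumes D1: "D1 \<noteq> bot"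
    and split: "\<And>\<T>. finite \<T> \<Longrightarrow> \<T> \<subseteq> dplus D1 \<Longrightarrow>
       \<exists>s0. \<forall>T\<in>\<T>. {s1\<in>T. P s0 s1} \<in> dplus D1 \<and> {s1\<in>T. \<not> P s0 s1} \<in> dplus D1"
  shows "\<exists>s0 :: nat \<Rightarrow> 'i. \<forall>S \<subseteq> {..<n}. {s1. \<forall>i<n. P (s0 i) s1 \<longleftrightarrow> i \<in> S} \<in> dplus D1"
proof (induction n)
  case 0
  show ?case using D1 by (simp add: UNIV_in_dplus)
next
  case (Suc n)
  then obtain s0 :: "nat \<Rightarrow> 'i" where
    branch: "\<And>S. S \<subseteq> {..<n} \<Longrightarrow> {s1. \<forall>i<n. P (s0 i) s1 \<longleftrightarrow> i \<in> S} \<in> dplus D1"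
    by blast
  define T where "T S = {s1. \<forall>i<n. P (s0 i) s1 \<longleftrightarrow> i \<in> S}" for S
  have "finite (T ` Pow {..<n})" "T ` Pow {..<n} \<subseteq> dplus D1"
    using branch by (auto simp: T_def)
  then obtain s' where s': "\<forall>X \<in> T ` Pow {..<n}.
      {s1\<in>X. P s' s1} \<in> dplus D1 \<and> {s1\<in>X. \<not> P s' s1} \<in> dplus D1"
    using split by blast
  show ?case
  proof (intro exI[of _ "s0(n := s')"] allI impI)
    fix S assume S: "S \<subseteq> {..<Suc n}"
    have "S - {n} \<in> Pow {..<n}" using S by auto
    then have "{s1\<in>T (S - {n}). P s' s1} \<in> dplus D1 \<and> {s1\<in>T (S - {n}). \<not> P s' s1} \<in> dplus D1"
      using s' by blast
    moreover have "{s1. \<forall>i<Suc n. P ((s0(n := s')) i) s1 \<longleftrightarrow> i \<in> S}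
        = {s1 \<in> T (S - {n}). P s' s1 \<longleftrightarrow> n \<in> S}"
      unfolding T_def by (auto simp: less_Suc_eq)
    ultimately show "{s1. \<forall>i<Suc n. P ((s0(n := s')) i) s1 \<longleftrightarrow> i \<in> S} \<in> dplus D1"
      by (cases "n \<in> S") simp_all
  qed
qed

lemma homogeneous_if_not_IP:
  fixes P :: "'i \<Rightarrow> 'j \<Rightarrow> bool"
  assumes "\<not> rel_has_IP P"
  shows "hereditarily_homogeneous P"
  unfolding hereditarily_homogeneous_def
proof (intro allI impI)
  fix D0 :: "'i filter" and D1 :: "'j filter"
  assume D0: "D0 \<noteq> bot" and D1: "D1 \<noteq> bot"
  show "homogeneous D0 D1 P"
  proof (rule ccontr)
    assume inhom: "\<not> homogeneous D0 D1 P"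
    have "\<exists>s0 :: nat \<Rightarrow> 'i. \<forall>S \<subseteq> {..<n}. \<exists>s1. \<forall>i<n. P (s0 i) s1 \<longleftrightarrow> i \<in> S" for n
    proof -
      obtain s0 :: "nat \<Rightarrow> 'i" where
        tree: "\<forall>S \<subseteq> {..<n}. {s1. \<forall>i<n. P (s0 i) s1 \<longleftrightarrow> i \<in> S} \<in> dplus D1"
        using shattering_tree[OF D1 splitting_point[OF D0 inhom]] by blast
      have "\<exists>s1. \<forall>i<n. P (s0 i) s1 \<longleftrightarrow> i \<in> S" if "S \<subseteq> {..<n}" for S
        using dplus_nonempty[OF tree[rule_format, OF that]] by simp
      then show ?thesis by blast
    qed
    then have "rel_has_IP P" unfolding rel_has_IP_def by blast
    with assms show False by contradiction
  qed
qed

lemma hereditarily_homogeneous_const: "hereditarily_homogeneous (\<lambda>(s0 :: 'i) (s1 :: 'j). v)"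
  unfolding hereditarily_homogeneous_def
proof (intro allI impI)
  fix D0 :: "'i filter" and D1 :: "'j filter"
  assume "D0 \<noteq> bot" "D1 \<noteq> bot"
  then have "UNIV \<in> dplus D0" "UNIV \<in> dplus D1" by (simp_all add: UNIV_in_dplus)
  moreover have "forall_D D0 UNIV (\<lambda>s0. forall_D D1 UNIV (\<lambda>s1. v = v))"
    by (simp add: forall_D_iff)
  ultimately show "homogeneous D0 D1 (\<lambda>s0 s1. v)" unfolding homogeneous_def by blast
qed

lemma homogeneous_determined:
  assumes "homogeneous D0 D1 f"
    and det: "\<And>x y x' y'. f x y = f x' y' \<Longrightarrow> g x y = g x' y'"
  shows "homogeneous D0 D1 g"
proof -
  obtain S0 S1 v where S: "S0 \<in> dplus D0" "S1 \<in> dplus D1"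
    and hom: "forall_D D0 S0 (\<lambda>s0. forall_D D1 S1 (\<lambda>s1. v = f s0 s1))"
    using assms(1) unfolding homogeneous_def by blast
  obtain w where w: "\<And>x y. v = f x y \<Longrightarrow> w = g x y"
    using det by metis
  from hom have "forall_D D0 S0 (\<lambda>s0. forall_D D1 S1 (\<lambda>s1. w = g s0 s1))"
    by (rule forall_D_mono) (auto elim: forall_D_mono w)
  with S show ?thesis unfolding homogeneous_def by blast
qed

lemma hereditarily_homogeneous_determined:
  "hereditarily_homogeneous f \<Longrightarrow> (\<And>x y x' y'. f x y = f x' y' \<Longrightarrow> g x y = g x' y')
     \<Longrightarrow> hereditarily_homogeneous g"
  unfolding hereditarily_homogeneous_def using homogeneous_determined by blast

text \<open>Pairing: first make f homogeneous, then g on the filters restricted to the sets found.\<close>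
lemma hereditarily_homogeneous_pair:
  fixes f :: "'i \<Rightarrow> 'j \<Rightarrow> 'v" and g :: "'i \<Rightarrow> 'j \<Rightarrow> 'w"
  assumes f: "hereditarily_homogeneous f" and g: "hereditarily_homogeneous g"
  shows "hereditarily_homogeneous (\<lambda>s0 s1. (f s0 s1, g s0 s1))"
  unfolding hereditarily_homogeneous_def
proof (intro allI impI)
  fix D0 :: "'i filter" and D1 :: "'j filter"
  assume D0: "D0 \<noteq> bot" and D1: "D1 \<noteq> bot"
  obtain S0 S1 v where S: "S0 \<in> dplus D0" "S1 \<in> dplus D1"
    and hom_f: "forall_D D0 S0 (\<lambda>s0. forall_D D1 S1 (\<lambda>s1. v = f s0 s1))"
    using f D0 D1 unfolding hereditarily_homogeneous_def homogeneous_def by blast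
  obtain S0' S1' w where S': "S0' \<in> dplus (inf D0 (principal S0))" "S1' \<in> dplus (inf D1 (principal S1))"
    and hom_g: "forall_D (inf D0 (principal S0)) S0'
                  (\<lambda>s0. forall_D (inf D1 (principal S1)) S1' (\<lambda>s1. w = g s0 s1))"
    using g inf_principal_nonbot[OF S(1)] inf_principal_nonbot[OF S(2)]
    unfolding hereditarily_homogeneous_def homogeneous_def by blast
  have "forall_D D0 (S0 \<inter> S0') (\<lambda>s0. forall_D D1 (S1 \<inter> S1') (\<lambda>s1. v = f s0 s1))"
    using hom_f by (rule forall_D_mono) (auto elim: forall_D_mono)
  moreover have "forall_D D0 (S0 \<inter> S0') (\<lambda>s0. forall_D D1 (S1 \<inter> S1') (\<lambda>s1. w = g s0 s1))"
    using hom_g by (simp add: forall_D_inf_principal)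
  ultimately have "forall_D D0 (S0 \<inter> S0') (\<lambda>s0.
      forall_D D1 (S1 \<inter> S1') (\<lambda>s1. v = f s0 s1) \<and> forall_D D1 (S1 \<inter> S1') (\<lambda>s1. w = g s0 s1))"
    by (rule forall_D_conj)
  then have "forall_D D0 (S0 \<inter> S0')
      (\<lambda>s0. forall_D D1 (S1 \<inter> S1') (\<lambda>s1. (v, w) = (f s0 s1, g s0 s1)))"
    by (rule forall_D_mono) (auto dest: forall_D_conj elim: forall_D_mono)
  moreover have "S0 \<inter> S0' \<in> dplus D0" "S1 \<inter> S1' \<in> dplus D1"
    using S' by (simp_all add: dplus_inf_principal)
  ultimately show "homogeneous D0 D1 (\<lambda>s0 s1. (f s0 s1, g s0 s1))"
    unfolding homogeneous_def by blast
qed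

lemma hereditarily_homogeneous_trace:
  assumes "finite K" and "\<And>k. k \<in> K \<Longrightarrow> hereditarily_homogeneous (P k)"
  shows "hereditarily_homogeneous (\<lambda>s0 s1. {k\<in>K. P k s0 s1})"
  using assms
proof (induction K rule: finite_induct)
  case empty
  show ?case by (simp add: hereditarily_homogeneous_const)
next
  case (insert k K)
  have "hereditarily_homogeneous (\<lambda>s0 s1. (P k s0 s1, {k\<in>K. P k s0 s1}))"
    using insert by (intro hereditarily_homogeneous_pair) auto
  then show ?case
  proof (rule hereditarily_homogeneous_determined)
    fix x y x' y'
    assume "(P k x y, {k\<in>K. P k x y}) = (P k x' y', {k\<in>K. P k x' y'})"
    then show "{k'\<in>insert k K. P k' x y} = {k'\<in>insert k K. P k' x' y'}"
      by auto
  qed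
qed

section \<open>From NIP to relations without IP\<close>

lemma env_append: "length xs = m \<Longrightarrow> env xs (\<lambda>j. ys ! (j - m)) = (\<lambda>j. (xs @ ys) ! j)"
  by (auto simp: env_def nth_append fun_eq_iff)

lemma NIP_rel_not_IP:
  fixes a :: "'i \<Rightarrow> 'a list" and b :: "'j \<Rightarrow> nat \<Rightarrow> 'a"
  assumes "NIP F R" and len: "\<And>s. length (a s) = m"
  shows "\<not> rel_has_IP (\<lambda>s0 s1. sat F R \<phi> (env (a s0) (b s1)))"
proof
  assume IP: "rel_has_IP (\<lambda>s0 s1. sat F R \<phi> (env (a s0) (b s1)))"
  have "has_IP F R \<phi> m"
    unfolding has_IP_def
  proof
    fix n
    obtain s0 :: "nat \<Rightarrow> 'i" where
      s0: "\<forall>S\<subseteq>{..<n}. \<exists>s1. \<forall>i<n. sat F R \<phi> (env (a (s0 i)) (b s1)) \<longleftrightarrow> i \<in> S"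
      using IP unfolding rel_has_IP_def by blast
    show "\<exists>a'. (\<forall>i<n. length (a' i) = m) \<and>
        (\<forall>S\<subseteq>{..<n}. \<exists>b'. \<forall>i<n. sat F R \<phi> (env (a' i) b') \<longleftrightarrow> i \<in> S)"
    proof (intro exI[of _ "\<lambda>i. a (s0 i)"] conjI allI impI)
      fix S :: "nat set" assume "S \<subseteq> {..<n}"
      then obtain s1 where "\<forall>i<n. sat F R \<phi> (env (a (s0 i)) (b s1)) \<longleftrightarrow> i \<in> S"
        using s0 by blast
      then show "\<exists>b'. \<forall>i<n. sat F R \<phi> (env (a (s0 i)) b') \<longleftrightarrow> i \<in> S" by blast
    qed (use len in blast)
  qed
  with assms(1) show False unfolding NIP_def by blast
qed

section \<open>Delta-types are determined by finitely many formula instances\<close>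

lemma evalt_cong: "(\<forall>j\<in>fvt t. e j = e' j) \<Longrightarrow> evalt F e t = evalt F e' t"
proof (induction t)
  case (Fn f ts)
  then have "map (evalt F e) ts = map (evalt F e') ts" by (intro map_cong) auto
  then show ?case by (simp only: evalt.simps)
qed simp

lemma sat_cong: "(\<forall>j\<in>fv \<phi>. e j = e' j) \<Longrightarrow> sat F R \<phi> e = sat F R \<phi> e'"
proof (induction \<phi> arbitrary: e e')
  case (Eq s t)
  then show ?case using evalt_cong[of s e e' F] evalt_cong[of t e e' F] by simp
next
  case (Rel r ts)
  then have "map (evalt F e) ts = map (evalt F e') ts" by (intro map_cong refl evalt_cong) auto
  then show ?case by (simp only: sat.simps)
next
  case (Conj \<phi>1 \<phi>2)
  then have "sat F R \<phi>1 e = sat F R \<phi>1 e'" "sat F R \<phi>2 e = sat F R \<phi>2 e'" by auto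
  then show ?case by simp
next
  case (Ex x \<phi>)
  then have "sat F R \<phi> (e(x := v)) = sat F R \<phi> (e'(x := v))" for v by auto
  then show ?case by simp
qed auto

lemma finite_fv: "finite (fv \<phi>)"
proof -
  have "finite (fvt t)" for t :: "'f trm" by (induction t) auto
  then show ?thesis by (induction \<phi>) auto
qed

definition fv_bound :: "('f, 'r) fm \<Rightarrow> nat" where
  "fv_bound \<phi> = Suc (Max (insert 0 (fv \<phi>)))"

lemma less_fv_bound: "j \<in> fv \<phi> \<Longrightarrow> j < fv_bound \<phi>"
  unfolding fv_bound_def using finite_fv[of \<phi>] by (simp add: le_imp_less_Suc)

definition instances :: "('f, 'r) fm set \<Rightarrow> 'a set \<Rightarrow> (('f, 'r) fm \<times> 'a list) set" where
  "instances \<Delta> C = {(\<phi>, cs). \<phi> \<in> \<Delta> \<and> set cs \<subseteq> C \<and> length cs \<le> fv_bound \<phi>}"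

lemma finite_instances:
  assumes "finite \<Delta>" and "finite C"
  shows "finite (instances \<Delta> C)"
proof (rule finite_subset)
  show "instances \<Delta> C \<subseteq> \<Delta> \<times> {cs. set cs \<subseteq> C \<and> length cs \<le> Max (fv_bound ` \<Delta>)}"
    unfolding instances_def using assms(1) by (auto intro: le_trans[OF _ Max_ge])
  show "finite (\<Delta> \<times> {cs. set cs \<subseteq> C \<and> length cs \<le> Max (fv_bound ` \<Delta>)})"
    using assms by (intro finite_cartesian_product finite_lists_length_le)
qed

lemma sat_take_params:
  "sat F R \<phi> (\<lambda>j. (xs @ cs) ! j) = sat F R \<phi> (\<lambda>j. (xs @ take (fv_bound \<phi>) cs) ! j)"
proof (rule sat_cong, rule ballI)
  fix j assume "j \<in> fv \<phi>"
  then have "j - length xs < fv_bound \<phi>"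
    using less_fv_bound by (blast intro: less_imp_diff_less)
  then show "(xs @ cs) ! j = (xs @ take (fv_bound \<phi>) cs) ! j"
    by (simp add: nth_append)
qed

lemma tp_Delta_determined:
  assumes len: "length xs = length ys"
    and agree: "\<And>\<phi> cs. (\<phi>, cs) \<in> instances \<Delta> C \<Longrightarrow>
                  sat F R \<phi> (\<lambda>j. (xs @ cs) ! j) = sat F R \<phi> (\<lambda>j. (ys @ cs) ! j)"
  shows "tp_Delta F R \<Delta> xs C = tp_Delta F R \<Delta> ys C"
proof -
  have same_sat: "sat F R \<phi> (\<lambda>j. (xs @ cs) ! j) = sat F R \<phi> (\<lambda>j. (ys @ cs) ! j)"
    if "\<phi> \<in> \<Delta>" "set cs \<subseteq> C" for \<phi> cs
  proof -
    have inst: "(\<phi>, take (fv_bound \<phi>) cs) \<in> instances \<Delta> C"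
      using that by (auto simp: instances_def dest: in_set_takeD)
    have "sat F R \<phi> (\<lambda>j. (xs @ cs) ! j) = sat F R \<phi> (\<lambda>j. (xs @ take (fv_bound \<phi>) cs) ! j)"
      by (rule sat_take_params)
    also have "\<dots> = sat F R \<phi> (\<lambda>j. (ys @ take (fv_bound \<phi>) cs) ! j)"
      using inst by (rule agree)
    also have "\<dots> = sat F R \<phi> (\<lambda>j. (ys @ cs) ! j)"
      by (rule sat_take_params[symmetric])
    finally show ?thesis .
  qed
  show ?thesis
    unfolding tp_Delta_def len by (intro Collect_cong) (auto simp: same_sat split: prod.split)
qed

theorem claim8p1:
  fixes F :: "'f \<Rightarrow> 'a list \<Rightarrow> 'a" and R :: "'r \<Rightarrow> 'a list \<Rightarrow> bool"
    and D0 :: "'i filter" and D1 :: "'j filter"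
    and m0 m1 :: nat
    and a0 :: "'i \<Rightarrow> 'a list" and a1 :: "'j \<Rightarrow> 'a list"
    and C :: "'a set" and \<Delta> :: "('f, 'r) fm set"
  assumes "NIP F R"
    and "D0 \<noteq> bot" and "D1 \<noteq> bot"
    and "\<forall>t. length (a0 t) = m0" and "\<forall>t. length (a1 t) = m1"
    and "finite C" and "finite \<Delta>"
  shows "\<exists>S0 S1 q. S0 \<in> dplus D0 \<and> S1 \<in> dplus D1 \<and>
           forall_D D0 S0 (\<lambda>s0. forall_D D1 S1 (\<lambda>s1.
              q = tp_Delta F R \<Delta> (a0 s0 @ a1 s1) C))"
proof -
  define P where "P k s0 s1 = sat F R (fst k) (\<lambda>j. (a0 s0 @ a1 s1 @ snd k) ! j)" for k s0 s1
  have "P k = (\<lambda>s0 s1. sat F R (fst k) (env (a0 s0) (\<lambda>j. (a1 s1 @ snd k) ! (j - m0))))" for k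
    using assms(4) by (simp add: P_def env_append fun_eq_iff)
  then have "\<not> rel_has_IP (P k)" for k
    using NIP_rel_not_IP[OF assms(1), of a0 m0] assms(4) by simp
  then have "hereditarily_homogeneous (\<lambda>s0 s1. {k \<in> instances \<Delta> C. P k s0 s1})"
    using finite_instances[OF assms(7,6)] homogeneous_if_not_IP
    by (intro hereditarily_homogeneous_trace) auto
  then have "hereditarily_homogeneous (\<lambda>s0 s1. tp_Delta F R \<Delta> (a0 s0 @ a1 s1) C)"
  proof (rule hereditarily_homogeneous_determined)
    fix x y x' y'
    assume same: "{k \<in> instances \<Delta> C. P k x y} = {k \<in> instances \<Delta> C. P k x' y'}"
    have "P (\<phi>, cs) x y = P (\<phi>, cs) x' y'" if "(\<phi>, cs) \<in> instances \<Delta> C" for \<phi> cs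
      using same that by blast
    then show "tp_Delta F R \<Delta> (a0 x @ a1 y) C = tp_Delta F R \<Delta> (a0 x' @ a1 y') C"
      using assms(4,5) by (intro tp_Delta_determined) (simp_all add: P_def)
  qed
  then have "homogeneous D0 D1 (\<lambda>s0 s1. tp_Delta F R \<Delta> (a0 s0 @ a1 s1) C)"
    using assms(2,3) unfolding hereditarily_homogeneous_def by blast
  then show ?thesis unfolding homogeneous_def .
qed

end
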